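(* Let $i\ge0$, $l\ge1$, $j_1,\ldots,j_l\ge0$ and $k_1,\ldots,k_l$ be integers. Then $$b_{i,j_1+\cdots+j_l,k_1+\cdots+k_l}=\sum\binom{i}{i_1,\ldots,i_l}\prod_{r=1}^{l}b_{i_r,j_r,k_r},$$ where the sum is over all tuples of integers $i_1\ge0,\ldots,i_l\ge0$ with $i_1+\cdots+i_l=i$.
   Context: For integers $i\ge0$, $j\ge0$ and real $k$, $b_{i,j,k}=\sum_{r=0}^{j}\binom{j}{r}(-1)^{j-r}(r+k)^i$, with the convention $0^0=1$. $\binom{i}{i_1,\ldots,i_l}=\frac{i!}{i_1!\cdots i_l!}$ is the multinomial coefficient. *)

theory Defs
  imports Main
begin

text \<open>b_{i,j,k} = sum_{r=0}^{j} binom(j,r) (-1)^(j-r) (r+k)^i, with 0^0 = 1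
  (Isabelle's power already satisfies 0 ^ 0 = 1). Here k is an integer.\<close>
definition bcoef :: "nat \<Rightarrow> nat \<Rightarrow> int \<Rightarrow> int" where
  "bcoef i j k = (\<Sum>r=0..j. int (j choose r) * (-1) ^ (j - r) * (int r + k) ^ i)"

definition multinom :: "nat \<Rightarrow> nat \<Rightarrow> (nat \<Rightarrow> nat) \<Rightarrow> nat" where
  "multinom i l ii = fact i div (\<Prod>r=1..l. fact (ii r))"

text \<open>Tuples (i_1,...,i_l) of nonnegative integers summing to i, represented as
  functions nat => nat that vanish outside {1..l}.\<close>
definition comps :: "nat \<Rightarrow> nat \<Rightarrow> (nat \<Rightarrow> nat) set" where
  "comps i l = {ii. (\<forall>r. r \<notin> {1..l} \<longrightarrow> ii r = 0) \<and> (\<Sum>r=1..l. ii r) = i}"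

end

theory Submission imports Defs begin

text \<open>The number b_{i,j,k} is the j-th forward difference of x \<mapsto> x^i at k, so it
  satisfies b_{i,j+1,k} = b_{i,j,k+1} - b_{i,j,k} and b_{i,0,k} = k^i. For two factors,
  b_{i,j_1+j_2,k_1+k_2} = \<Sum>_a C(i,a) b_{a,j_1,k_1} b_{i-a,j_2,k_2} follows by induction on j_2:
  both sides obey the same difference recursion in k_2, and for j_2 = 0 it is the binomial
  theorem for (r + k_1 + k_2)^i. The general case is an induction on the index set: splitting
  off one index x, a composition of i is a part a for x together with a composition of i - a of
  the rest, and the multinomial coefficient factors as C(i,a) times the multinomial coefficient
  of the rest.\<close>

lemma alternating_binomial_sum_Suc:
  fixes f :: "nat \<Rightarrow> 'a::comm_ring_1"
  shows "(\<Sum>r=0..Suc j. of_nat (Suc j choose r) * (-1) ^ (Suc j - r) * f r)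
       = (\<Sum>r=0..j. of_nat (j choose r) * (-1) ^ (j - r) * f (Suc r))
       - (\<Sum>r=0..j. of_nat (j choose r) * (-1) ^ (j - r) * f r)"
proof -
  let ?A = "\<Sum>r=0..j. of_nat (j choose r) * (-1) ^ (j - r) * f (Suc r)"
  let ?B = "\<Sum>r=0..j. of_nat (j choose r) * (-1) ^ (j - r) * f r"
  let ?C = "\<Sum>r=0..j. of_nat (j choose Suc r) * (-1) ^ (j - Suc r) * f (Suc r)"
  have B_shift: "?B = (-1) ^ j * f 0 + ?C"
    using sum.atLeast0_atMost_Suc_shift[of "\<lambda>r. of_nat (j choose r) * (-1) ^ (j - r) * f r" j]
    by (simp add: sum.atLeast0_atMost_Suc binomial_eq_0)
  have sign_flip: "of_nat (j choose Suc r) * (-1) ^ (j - r)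
      = - (of_nat (j choose Suc r) * (-1) ^ (j - Suc r) :: 'a)" for r
    by (cases "r < j") (simp_all add: Suc_diff_Suc[symmetric] binomial_eq_0)
  \<comment> \<open>Pascal's rule splits the left-hand side into shifted copies of the sums\<close>
  have "(\<Sum>r=0..Suc j. of_nat (Suc j choose r) * (-1) ^ (Suc j - r) * f r)
      = (-1) ^ Suc j * f 0 + ?A
        + (\<Sum>r=0..j. of_nat (j choose Suc r) * (-1) ^ (j - r) * f (Suc r))"
    by (subst sum.atLeast0_atMost_Suc_shift) (simp add: sum.distrib algebra_simps)
  also have "\<dots> = (-1) ^ Suc j * f 0 + ?A - ?C"
    by (simp add: sign_flip sum_negf)
  finally show ?thesis
    using B_shift by simp
qed

lemma bcoef_0: "bcoef i 0 k = k ^ i"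
  by (simp add: bcoef_def)

lemma bcoef_Suc: "bcoef i (Suc j) k = bcoef i j (k + 1) - bcoef i j k"
  using alternating_binomial_sum_Suc[of j "\<lambda>r. (int r + k) ^ i"]
  by (simp add: bcoef_def algebra_simps)

lemma bcoef_add:
  "bcoef i (j1 + j2) (k1 + k2)
    = (\<Sum>a=0..i. int (i choose a) * bcoef a j1 k1 * bcoef (i - a) j2 k2)"
proof (induction j2 arbitrary: k2)
  case 0
  have "bcoef i j1 (k1 + k2)
      = (\<Sum>r=0..j1. int (j1 choose r) * (-1) ^ (j1 - r) * ((int r + k1) + k2) ^ i)"
    by (simp add: bcoef_def add.assoc)
  also have "\<dots> = (\<Sum>r=0..j1. \<Sum>a=0..i.
      int (i choose a) * (int (j1 choose r) * (-1) ^ (j1 - r) * (int r + k1) ^ a) * k2 ^ (i - a))"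
  proof -
    have "(int r + k1 + k2) ^ i
        = (\<Sum>a=0..i. int (i choose a) * (int r + k1) ^ a * k2 ^ (i - a))" for r
      using binomial_ring[of "int r + k1" k2 i] by (simp add: atLeast0AtMost)
    then show ?thesis
      by (simp add: sum_distrib_left mult_ac)
  qed
  also have "\<dots> = (\<Sum>a=0..i. int (i choose a) * bcoef a j1 k1 * k2 ^ (i - a))"
    by (subst sum.swap) (simp add: bcoef_def sum_distrib_left sum_distrib_right algebra_simps)
  finally show ?case
    by (simp add: bcoef_0)
next
  case (Suc j2)
  have "bcoef i (j1 + Suc j2) (k1 + k2)
      = bcoef i (j1 + j2) (k1 + (k2 + 1)) - bcoef i (j1 + j2) (k1 + k2)"
    by (simp add: bcoef_Suc algebra_simps)
  also have "\<dots> = (\<Sum>a=0..i. int (i choose a) * bcoef a j1 k1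
                          * (bcoef (i - a) j2 (k2 + 1) - bcoef (i - a) j2 k2))"
    unfolding Suc.IH[of "k2 + 1"] Suc.IH[of k2] sum_subtractf[symmetric]
    by (simp add: algebra_simps)
  finally show ?case
    by (simp add: bcoef_Suc)
qed

definition compositions :: "'a set \<Rightarrow> nat \<Rightarrow> ('a \<Rightarrow> nat) set" where
  "compositions S i = {ii. (\<forall>r. r \<notin> S \<longrightarrow> ii r = 0) \<and> sum ii S = i}"

lemma compositions_empty: "compositions {} i = (if i = 0 then {\<lambda>_. 0} else {})"
  by (auto simp: compositions_def)

lemma sum_fun_upd_notin: "x \<notin> S \<Longrightarrow> sum (f(x := a)) S = sum f S"
  by (rule sum.cong) auto

lemma compositions_insert:
  assumes "finite S" "x \<notin> S"
  shows "compositions (insert x S) i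
       = (\<lambda>(a, ii). ii(x := a)) ` (SIGMA a:{0..i}. compositions S (i - a))"
proof (intro equalityI subsetI)
  fix g assume "g \<in> compositions (insert x S) i"
  moreover have "sum (g(x := 0)) S = sum g S"
    using assms(2) by (rule sum_fun_upd_notin)
  ultimately have "(g x, g(x := 0)) \<in> (SIGMA a:{0..i}. compositions S (i - a))"
    using assms by (auto simp: compositions_def)
  moreover have "g = (\<lambda>(a, ii). ii(x := a)) (g x, g(x := 0))"
    by simp
  ultimately show "g \<in> (\<lambda>(a, ii). ii(x := a)) ` (SIGMA a:{0..i}. compositions S (i - a))"
    by blast
next
  fix g assume "g \<in> (\<lambda>(a, ii). ii(x := a)) ` (SIGMA a:{0..i}. compositions S (i - a))"
  then obtain a ii where "a \<le> i" "ii \<in> compositions S (i - a)" "g = ii(x := a)"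
    by auto
  moreover have "sum (ii(x := a)) S = sum ii S"
    using assms(2) by (rule sum_fun_upd_notin)
  ultimately show "g \<in> compositions (insert x S) i"
    using assms by (auto simp: compositions_def)
qed

lemma inj_on_compositions_insert:
  assumes "x \<notin> S"
  shows "inj_on (\<lambda>(a, ii). ii(x := a)) (SIGMA a:{0..i}. compositions S (i - a))"
proof (rule inj_onI, clarify)
  fix a ii b jj
  assume "ii \<in> compositions S (i - a)" "jj \<in> compositions S (i - b)"
    and upd_eq: "ii(x := a) = jj(x := b)"
  then have "ii x = jj x"
    using assms by (simp add: compositions_def)
  with upd_eq show "a = b \<and> ii = jj"
    by (metis fun_upd_same fun_upd_triv fun_upd_upd)
qed

lemma finite_compositions: "finite S \<Longrightarrow> finite (compositions S i)"
proof (induction S arbitrary: i rule: finite_induct)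
  case empty
  then show ?case
    by (simp add: compositions_empty)
next
  case (insert x S)
  then show ?case
    by (simp add: compositions_insert)
qed

lemma prod_fact_dvd_fact_sum: "(\<Prod>r\<in>S. fact (f r) :: nat) dvd fact (sum f S)"
proof (induction S rule: infinite_finite_induct)
  case (insert x S)
  have "fact (f x) * (\<Prod>r\<in>S. fact (f r) :: nat) dvd fact (f x) * fact (sum f S)"
    using insert.IH by (rule mult_dvd_mono[OF dvd_refl])
  also have "\<dots> dvd fact (f x + sum f S)"
    by (rule fact_fact_dvd_fact)
  finally show ?case
    using insert by simp
qed simp_all

lemma fact_div_fact_mult:
  fixes P :: nat
  assumes "a \<le> i" "P dvd fact (i - a)"
  shows "fact i div (fact a * P) = (i choose a) * (fact (i - a) div P)"
proof -
  obtain q where q: "fact (i - a) = P * q"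
    using assms(2) by blast
  then have "P > 0"
    by (metis fact_nonzero gr0I mult_is_0)
  moreover have "fact i = (fact a * P) * ((i choose a) * q)"
    using binomial_fact_lemma[OF assms(1)] q by (simp add: algebra_simps)
  ultimately show ?thesis
    using q by simp
qed

lemma bcoef_sum:
  fixes j :: "'a \<Rightarrow> nat" and k :: "'a \<Rightarrow> int"
  assumes "finite S"
  shows "bcoef i (sum j S) (sum k S)
       = (\<Sum>ii\<in>compositions S i.
            int (fact i div (\<Prod>r\<in>S. fact (ii r))) * (\<Prod>r\<in>S. bcoef (ii r) (j r) (k r)))"
  using assms
proof (induction S arbitrary: i rule: finite_induct)
  case empty
  then show ?case
    by (cases i) (simp_all add: compositions_empty bcoef_0)
next
  case (insert x S)
  let ?term = "\<lambda>S i ii.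
    int (fact i div (\<Prod>r\<in>S. fact (ii r))) * (\<Prod>r\<in>S. bcoef (ii r) (j r) (k r))"
  let ?upd = "\<lambda>(a, ii). ii(x := a)"
  have term_upd: "?term (insert x S) i (ii(x := a))
      = int (i choose a) * bcoef a (j x) (k x) * ?term S (i - a) ii"
    if "a \<le> i" "ii \<in> compositions S (i - a)" for a ii
  proof -
    have "(\<Prod>r\<in>S. fact (ii r) :: nat) dvd fact (i - a)"
      using prod_fact_dvd_fact_sum[of ii S] that(2) by (simp add: compositions_def)
    moreover have "r \<noteq> x" if "r \<in> S" for r
      using insert.hyps(2) that by blast
    ultimately show ?thesis
      using insert.hyps that(1) by (simp add: fact_div_fact_mult cong: prod.cong)
  qed
  have "bcoef i (sum j (insert x S)) (sum k (insert x S))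
      = bcoef i (j x + sum j S) (k x + sum k S)"
    using insert.hyps by simp
  also have "\<dots> = (\<Sum>a=0..i.
      int (i choose a) * bcoef a (j x) (k x) * bcoef (i - a) (sum j S) (sum k S))"
    by (rule bcoef_add)
  also have "\<dots>
      = (\<Sum>a=0..i. \<Sum>ii\<in>compositions S (i - a). ?term (insert x S) i (ii(x := a)))"
    unfolding insert.IH sum_distrib_left
    by (intro sum.cong refl) (simp add: term_upd del: fun_upd_apply)
  also have "\<dots>
      = sum (?term (insert x S) i \<circ> ?upd) (SIGMA a:{0..i}. compositions S (i - a))"
    using finite_compositions[OF insert.hyps(1)] by (simp add: sum.Sigma split_def)
  also have "\<dots> = sum (?term (insert x S) i) (compositions (insert x S) i)"
    unfolding compositions_insert[OF insert.hyps]
    by (rule sum.reindex[symmetric, OF inj_on_compositions_insert[OF insert.hyps(2)]])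
  finally show ?case .
qed

theorem mainTheorem18:
  fixes i l :: nat and j :: "nat \<Rightarrow> nat" and k :: "nat \<Rightarrow> int"
  assumes "l \<ge> 1"
  shows "bcoef i (\<Sum>r=1..l. j r) (\<Sum>r=1..l. k r)
       = (\<Sum>ii\<in>comps i l. int (multinom i l ii) * (\<Prod>r=1..l. bcoef (ii r) (j r) (k r)))"
proof -
  have "comps i l = compositions {1..l} i"
    by (simp add: comps_def compositions_def)
  then show ?thesis
    by (simp add: bcoef_sum multinom_def)
qed

end
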